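(* Let $\mathcal C$ be a linear $[n,k]$ MDS code over $F$, and let $L\in\mathbb Z^+$ satisfy $$L<\max\left\{\binom{n-1}{k-1}\Big/\binom{\lceil (n+k)/2\rceil-2}{k-1},\;k\right\}+1,$$ where the ratio is interpreted as $+\infty$ if its denominator is $0$. If $\mathcal C$ is $L$-MDS, then $\mathcal C$ is $\ell$-MDS for every $\ell\in\{1,\dots,L\}$.
   Context: $F=\mathrm{GF}(q)$; $\mathsf w(\cdot)$ is Hamming weight. For $L\in\mathbb Z^+$ and nonnegative $\tau\in\frac{1}{L+1}\mathbb Z$, a code $\mathcal C\subseteq F^n$ is strongly-$(\tau,L)$-list decodable if there do not exist $y\in F^n$ and $L+1$ distinct codewords $c_0,\dots,c_L\in\mathcal C$ with $\sum_{m=0}^{L}\mathsf w(y-c_m)\le(L+1)\tau$. A linear $[n,k]$ code over $F$ is called $L$-MDS if it is strongly-$\left(\frac{L(n-k)}{L+1},L\right)$-list decodable; equivalently, any $L+1$ distinct vectors lying in a common coset of the code have total Hamming weight greater than $L(n-k)$. (1-MDS coincides with MDS.) *)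

theory Defs
  imports "HOL-Analysis.Cartesian_Space"
begin

text \<open>Codes of length n over a finite field F are subsets of F^n, rendered as
  vectors of type 'a^'n with 'a a finite field and n = CARD('n).\<close>

definition hamming_weight :: "'a::zero ^ 'n \<Rightarrow> nat" where
  "hamming_weight x = card {i. x $ i \<noteq> 0}"

definition linear_code :: "('a::field ^ 'n) set \<Rightarrow> nat \<Rightarrow> bool" where
  "linear_code C k \<longleftrightarrow> vec.subspace C \<and> vec.dim C = k"

definition MDS_code :: "('a::field ^ 'n) set \<Rightarrow> nat \<Rightarrow> bool" where
  "MDS_code C k \<longleftrightarrow> linear_code C k \<and>
     (\<forall>c\<in>C. c \<noteq> 0 \<longrightarrow> hamming_weight c \<ge> CARD('n) - k + 1)"

definition strongly_list_decodable :: "('a::field ^ 'n) set \<Rightarrow> real \<Rightarrow> nat \<Rightarrow> bool" where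
  "strongly_list_decodable C \<tau> L \<longleftrightarrow>
     \<not> (\<exists>(y::'a^'n) (c::nat \<Rightarrow> 'a^'n).
           inj_on c {0..L} \<and> c ` {0..L} \<subseteq> C \<and>
           (\<Sum>m=0..L. real (hamming_weight (y - c m))) \<le> (real L + 1) * \<tau>)"

definition L_MDS :: "('a::field ^ 'n) set \<Rightarrow> nat \<Rightarrow> nat \<Rightarrow> bool" where
  "L_MDS C k L \<longleftrightarrow> linear_code C k \<and>
     strongly_list_decodable C (real L * (real CARD('n) - real k) / (real L + 1)) L"

end

theory Submission
  imports Defs
begin

text \<open>Suppose some \<open>l \<le> L\<close> admits a centre \<open>y\<close> and \<open>l + 1\<close> distinct codewords of total
  distance at most \<open>l(n - k)\<close> from \<open>y\<close>. Then \<open>0 < k < n\<close> and \<open>y\<close> is not a codeword. An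
  MDS code interpolates \<open>y\<close> on any \<open>k\<close> coordinates, so the Hamming ball of radius \<open>n - k\<close>
  around \<open>y\<close> is large: let \<open>c\<^sub>0\<close> be a nearest codeword and \<open>i\<close> a coordinate where it
  differs from \<open>y\<close>. Each of the \<open>binom(n-1, k-1)\<close> sets of \<open>k\<close> coordinates containing
  \<open>i\<close> is interpolated by a codeword \<open>b \<noteq> c\<^sub>0\<close> in the ball; by unique decoding \<open>b\<close> is
  far from \<open>y\<close>, so it agrees with \<open>y\<close> on few coordinates and accounts for at most
  \<open>binom(\<lceil>(n+k)/2\<rceil>-2, k-1)\<close> of these sets. Hence the ball contains more than \<open>L\<close>
  codewords, and adding codewords of the ball to the given ones (each at distance at most
  \<open>n - k\<close>) produces \<open>L + 1\<close> codewords violating the \<open>L\<close>-MDS property.\<close>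

lemma Suc_mult_binomial_le_binomial:
  "(a + 1) * ((a + f) choose a) \<le> (a + 2 * f + 1) choose (a::nat)"
proof (induction a)
  case 0
  then show ?case by simp
next
  case (Suc a)
  define P where "P = (a + f) choose a"
  define Q where "Q = (a + 2 * f + 1) choose a"
  define X where "X = (Suc a + f) choose Suc a"
  define Y where "Y = (Suc a + 2 * f + 1) choose Suc a"
  have X: "(a + 1) * X = (a + 1 + f) * P"
    using Suc_times_binomial[of a "a + f"] by (simp add: X_def P_def)
  have Y: "(a + 1) * Y = (a + 2 * f + 2) * Q"
    using Suc_times_binomial[of a "a + 2 * f + 1"] by (simp add: Y_def Q_def)
  have "(a + 1) * ((a + 2) * X) = (a + 2) * (a + 1 + f) * P"
    by (metis X mult.assoc mult.left_commute)
  also have "\<dots> \<le> (a + 2 * f + 2) * (a + 1) * P"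
    by (intro mult_right_mono) (simp_all add: algebra_simps)
  also have "\<dots> \<le> (a + 2 * f + 2) * Q"
    unfolding mult.assoc using Suc.IH by (intro mult_left_mono) (simp_all add: P_def Q_def)
  also have "\<dots> = (a + 1) * Y"
    using Y by simp
  finally have "(a + 2) * X \<le> Y"
    by (simp only: mult_le_cancel1)
  then show ?case
    by (simp add: X_def Y_def)
qed

lemma mult_binomial_half_le_binomial:
  assumes "1 \<le> k" "k < n"
  shows "k * (((n + k + 1) div 2 - 2) choose (k - 1)) \<le> (n - 1) choose (k - 1)"
proof -
  define a where "a = k - 1"
  define f where "f = (n - k + 1) div 2 - 1"
  have "(n + k + 1) div 2 - 2 = a + f" and "a + 2 * f + 1 \<le> n - 1"
    using assms unfolding a_def f_def by linarith+
  then show ?thesis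
    using Suc_mult_binomial_le_binomial[of a f] binomial_right_mono[of "a + 2 * f + 1" "n - 1" a]
      assms by (simp add: a_def)
qed

lemma card_subsets_containing:
  assumes "finite A" "i \<in> A" "1 \<le> k"
  shows "card {T. T \<subseteq> A \<and> i \<in> T \<and> card T = k} = (card A - 1) choose (k - 1)"
proof -
  let ?U = "{U. U \<subseteq> A - {i} \<and> card U = k - 1}"
  have "{T. T \<subseteq> A \<and> i \<in> T \<and> card T = k} = insert i ` ?U"
  proof (intro set_eqI iffI)
    fix T assume T: "T \<in> {T. T \<subseteq> A \<and> i \<in> T \<and> card T = k}"
    then have "T = insert i (T - {i})" and "card (T - {i}) = k - 1"
      using finite_subset[OF _ assms(1)] by auto
    then show "T \<in> insert i ` ?U"
      using T by blast
  next
    fix T assume "T \<in> insert i ` ?U"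
    then obtain U where "U \<subseteq> A - {i}" "card U = k - 1" "T = insert i U"
      by auto
    moreover have "finite U" "i \<notin> U"
      using \<open>U \<subseteq> A - {i}\<close> assms(1) finite_subset by auto
    ultimately show "T \<in> {T. T \<subseteq> A \<and> i \<in> T \<and> card T = k}"
      using assms by auto
  qed
  moreover have "inj_on (insert i) ?U"
  proof (rule inj_onI)
    fix U V assume "U \<in> ?U" "V \<in> ?U" "insert i U = insert i V"
    then show "U = V"
      by (metis Diff_insert_absorb mem_Collect_eq subset_Diff_insert)
  qed
  ultimately have "card {T. T \<subseteq> A \<and> i \<in> T \<and> card T = k} = card ?U"
    by (simp add: card_image)
  also have "\<dots> = card (A - {i}) choose (k - 1)"
    using assms(1) by (simp add: n_subsets)
  also have "card (A - {i}) = card A - 1"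
    using assms by simp
  finally show ?thesis .
qed

lemma hamming_weight_le_card: "hamming_weight (x :: 'a::zero ^ 'n) \<le> CARD('n)"
  unfolding hamming_weight_def by (rule card_mono) auto

lemma hamming_weight_eq_0_iff: "hamming_weight (x :: 'a::zero ^ 'n) = 0 \<longleftrightarrow> x = 0"
  unfolding hamming_weight_def by (auto simp: vec_eq_iff)

lemma card_zero_coordinates: "card {i. x $ i = 0} = CARD('n) - hamming_weight (x :: 'a::zero ^ 'n)"
proof -
  have "{i. x $ i = 0} = UNIV - {i. x $ i \<noteq> 0}"
    by auto
  then show ?thesis
    unfolding hamming_weight_def by (simp add: card_Diff_subset)
qed

lemma hamming_weight_le_if_zero_on:
  fixes x :: "'a::zero ^ 'n"
  assumes "T \<subseteq> {i. x $ i = 0}"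
  shows "hamming_weight x \<le> CARD('n) - card T"
  using card_mono[OF _ assms] card_zero_coordinates[of x] hamming_weight_le_card[of x] by simp

lemma hamming_weight_diff_le:
  fixes a b y :: "'a::ab_group_add ^ 'n"
  shows "hamming_weight (a - b) \<le> hamming_weight (y - a) + hamming_weight (y - b)"
proof -
  have "{i. (a - b) $ i \<noteq> 0} \<subseteq> {i. (y - a) $ i \<noteq> 0} \<union> {i. (y - b) $ i \<noteq> 0}"
    by auto
  then show ?thesis
    unfolding hamming_weight_def by (meson card_Un_le card_mono finite le_trans)
qed

definition hamming_ball :: "'a::ab_group_add ^ 'n \<Rightarrow> nat \<Rightarrow> ('a ^ 'n) set" where
  "hamming_ball y r = {x. hamming_weight (y - x) \<le> r}"

lemma linear_code_dim_le: "linear_code (C :: ('a::field ^ 'n) set) k \<Longrightarrow> k \<le> CARD('n)"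
  unfolding linear_code_def using dim_subset_UNIV_cart_gen[of C] by simp

lemma MDS_code_dist:
  fixes C :: "('a::field ^ 'n) set"
  assumes "MDS_code C k" "a \<in> C" "b \<in> C" "a \<noteq> b"
  shows "CARD('n) - k + 1 \<le> hamming_weight (a - b)"
proof -
  have "a - b \<in> C"
    using assms vec.subspace_diff unfolding MDS_code_def linear_code_def by blast
  then show ?thesis
    using assms unfolding MDS_code_def by auto
qed

lemma MDS_code_dim_pos:
  fixes C :: "('a::field ^ 'n) set"
  assumes "MDS_code C k" "a \<in> C" "b \<in> C" "a \<noteq> b"
  shows "1 \<le> k"
  using MDS_code_dist[OF assms] hamming_weight_le_card[of "a - b"] by linarith

lemma MDS_code_eq_if_agree:
  fixes C :: "('a::field ^ 'n) set"
  assumes "MDS_code C k" "card T = k" "a \<in> C" "b \<in> C" "\<forall>j\<in>T. a $ j = b $ j"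
  shows "a = b"
proof (rule ccontr)
  assume "a \<noteq> b"
  then have "CARD('n) - k + 1 \<le> hamming_weight (a - b)"
    using MDS_code_dist assms by blast
  moreover have "hamming_weight (a - b) \<le> CARD('n) - card T"
    by (rule hamming_weight_le_if_zero_on) (use assms in auto)
  ultimately show False
    using assms by simp
qed

text \<open>Restriction to the coordinates in \<open>T\<close> is injective on the code by the previous lemma,
  hence maps it onto the \<open>k\<close>-dimensional space of vectors supported in \<open>T\<close>.\<close>

lemma MDS_code_interpolate:
  fixes C :: "('a::field ^ 'n) set"
  assumes mds: "MDS_code C k" and T: "card T = k"
  shows "\<exists>c\<in>C. \<forall>j\<in>T. c $ j = y $ j"
proof -
  define restrict :: "'a ^ 'n \<Rightarrow> 'a ^ 'n" where
    "restrict x = (\<chi> j. if j \<in> T then x $ j else 0)" for x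
  define W where "W = {x :: 'a ^ 'n. \<forall>i. i \<notin> T \<longrightarrow> x $ i = 0}"
  have restrict_eq: "restrict a = restrict b \<longleftrightarrow> (\<forall>j\<in>T. a $ j = b $ j)" for a b
    by (auto simp: restrict_def vec_eq_iff)
  have lin: "Vector_Spaces.linear (*s) (*s) restrict"
    unfolding Vector_Spaces.linear_iff restrict_def
    by (simp add: vec_eq_iff vec.vector_space_axioms)
  have sub: "vec.subspace C" and dimC: "vec.dim C = k"
    using mds unfolding MDS_code_def linear_code_def by blast+
  have "inj_on restrict (vec.span C)"
    unfolding vec.span_eq_iff[THEN iffD2, OF sub]
    using MDS_code_eq_if_agree[OF mds T] by (simp add: inj_on_def restrict_eq)
  then have "vec.dim (restrict ` C) = k"
    using vec.dim_image_eq[OF lin] dimC by simp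
  moreover have "vec.dim W = k"
    using dim_substandard_cart[of T] T by (simp add: W_def)
  moreover have "restrict ` C \<subseteq> W"
    by (auto simp: W_def restrict_def)
  moreover have "vec.subspace W"
    unfolding W_def vec.subspace_def by auto
  ultimately have "restrict ` C = W"
    using vec.subspace_dim_equal vec.linear_subspace_image[OF lin sub] by (metis order_refl)
  moreover have "restrict y \<in> W"
    by (auto simp: W_def restrict_def)
  ultimately obtain c where "c \<in> C" "restrict c = restrict y"
    by (metis imageE)
  then show ?thesis
    using restrict_eq by blast
qed

lemma MDS_code_far_from_nearest:
  fixes C :: "('a::field ^ 'n) set"
  assumes mds: "MDS_code C k" and c0: "c0 \<in> C" "\<forall>b\<in>C. hamming_weight (y - c0) \<le> hamming_weight (y - b)"
    and b: "b \<in> C" "b \<noteq> c0"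
  shows "(CARD('n) - k) div 2 + 1 \<le> hamming_weight (y - b)"
proof -
  have "hamming_weight (y - c0) \<le> hamming_weight (y - b)"
    using c0(2) b(1) by blast
  then show ?thesis
    using MDS_code_dist[OF mds b(1) c0(1) b(2)] hamming_weight_diff_le[of b c0 y] by linarith
qed

lemma MDS_code_covering_bound:
  fixes C :: "('a::{finite,field} ^ 'n) set"
  assumes mds: "MDS_code C k" and k: "1 \<le> k" "k < CARD('n)"
    and far: "\<And>b. b \<in> C \<Longrightarrow> b $ i = y $ i \<Longrightarrow> (CARD('n) - k) div 2 + 1 \<le> hamming_weight (y - b)"
  shows "(CARD('n) - 1) choose (k - 1)
    \<le> card {b \<in> C \<inter> hamming_ball y (CARD('n) - k). b $ i = y $ i}
        * (((CARD('n) + k + 1) div 2 - 2) choose (k - 1))"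
proof -
  define S where "S = {b \<in> C \<inter> hamming_ball y (CARD('n) - k). b $ i = y $ i}"
  define G where "G b = {T. T \<subseteq> {j. (y - b) $ j = 0} \<and> i \<in> T \<and> card T = k}" for b
  have cover: "{T. T \<subseteq> UNIV \<and> i \<in> T \<and> card T = k} \<subseteq> (\<Union>b\<in>S. G b)"
  proof
    fix T assume "T \<in> {T. T \<subseteq> UNIV \<and> i \<in> T \<and> card T = k}"
    then have T: "i \<in> T" "card T = k"
      by auto
    obtain b where b: "b \<in> C" "\<forall>j\<in>T. b $ j = y $ j"
      using MDS_code_interpolate[OF mds T(2)] by blast
    then have zero: "T \<subseteq> {j. (y - b) $ j = 0}"
      by auto
    then have "b \<in> S"
      using hamming_weight_le_if_zero_on[OF zero] T b by (auto simp: S_def hamming_ball_def)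
    moreover have "T \<in> G b"
      using zero T by (simp add: G_def)
    ultimately show "T \<in> (\<Union>b\<in>S. G b)"
      by blast
  qed
  have "(CARD('n) - 1) choose (k - 1) = card {T. T \<subseteq> UNIV \<and> i \<in> T \<and> card T = k}"
    using card_subsets_containing[of UNIV i k] k by simp
  also have "\<dots> \<le> card (\<Union>b\<in>S. G b)"
    using cover by (rule card_mono[rotated]) simp
  also have "\<dots> \<le> (\<Sum>b\<in>S. card (G b))"
    by (rule card_UN_le) simp
  also have "\<dots> \<le> card S * (((CARD('n) + k + 1) div 2 - 2) choose (k - 1))"
  proof (rule sum_bounded_above[where 'a = nat, simplified])
    fix b assume "b \<in> S"
    then have b: "b \<in> C" "b $ i = y $ i"
      by (auto simp: S_def)
    have "card (G b) = (card {j. (y - b) $ j = 0} - 1) choose (k - 1)"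
      unfolding G_def using b k by (intro card_subsets_containing) auto
    also have "\<dots> = (CARD('n) - hamming_weight (y - b) - 1) choose (k - 1)"
      by (simp only: card_zero_coordinates)
    also have "\<dots> \<le> ((CARD('n) + k + 1) div 2 - 2) choose (k - 1)"
      using far[OF b] k by (intro binomial_right_mono) linarith
    finally show "card (G b) \<le> ((CARD('n) + k + 1) div 2 - 2) choose (k - 1)" .
  qed
  finally show ?thesis
    by (simp add: S_def)
qed

lemma MDS_code_card_ball_ge:
  fixes C :: "('a::{finite,field} ^ 'n) set"
  assumes mds: "MDS_code C k" and k: "1 \<le> k" "k < CARD('n)" and y: "y \<notin> C"
  shows "max (real ((CARD('n) - 1) choose (k - 1)) / real (((CARD('n) + k + 1) div 2 - 2) choose (k - 1)))
           (real k) + 1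
         \<le> real (card (C \<inter> hamming_ball y (CARD('n) - k)))"
proof -
  define num where "num = (CARD('n) - 1) choose (k - 1)"
  define den where "den = ((CARD('n) + k + 1) div 2 - 2) choose (k - 1)"
  define B where "B = C \<inter> hamming_ball y (CARD('n) - k)"
  obtain T :: "'n set" where T: "card T = k"
    using obtain_subset_with_card_n[of k "UNIV :: 'n set"] k by auto
  then obtain c1 where c1: "c1 \<in> C" "\<forall>j\<in>T. c1 $ j = y $ j"
    using MDS_code_interpolate[OF mds] by blast
  have c1_near: "hamming_weight (y - c1) \<le> CARD('n) - k"
    using hamming_weight_le_if_zero_on[of T "y - c1"] c1 T by force
  obtain c0 where c0: "c0 \<in> C" "\<forall>b\<in>C. hamming_weight (y - c0) \<le> hamming_weight (y - b)"
    using ex_has_least_nat[of "\<lambda>b. b \<in> C" c1 "\<lambda>b. hamming_weight (y - b)"] c1(1) by blast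
  have "c0 \<in> B"
    using c0 c1(1) c1_near by (force simp: B_def hamming_ball_def)
  obtain i where i: "c0 $ i \<noteq> y $ i"
    using y c0(1) by (metis vec_eq_iff)
  define S where "S = {b \<in> B. b $ i = y $ i}"
  have num_le: "num \<le> card S * den"
    unfolding num_def den_def S_def B_def
    using MDS_code_far_from_nearest[OF mds c0] i by (intro MDS_code_covering_bound[OF mds k]) auto
  have "k * den \<le> num"
    unfolding num_def den_def using k by (rule mult_binomial_half_le_binomial)
  moreover have "0 < den"
    unfolding den_def using k by simp
  ultimately have "k \<le> card S"
    using num_le by (metis le_trans mult_le_cancel2)
  moreover have "real num / real den \<le> real (card S)"
    using num_le \<open>0 < den\<close> by (simp add: divide_le_eq flip: of_nat_mult)
  moreover have "card S + 1 \<le> card B"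
  proof -
    have "insert c0 S \<subseteq> B" "c0 \<notin> S"
      using \<open>c0 \<in> B\<close> i by (auto simp: S_def)
    then show ?thesis
      using card_mono[of B "insert c0 S"] finite_subset[of S B] by (simp add: B_def)
  qed
  ultimately have "max (real num / real den) (real k) + 1 \<le> real (card B)"
    by (simp add: max_def)
  then show ?thesis
    by (simp add: num_def den_def B_def)
qed

lemma ex_inj_indexing_iff_ex_subset_card:
  "(\<exists>c. inj_on c {0..L} \<and> c ` {0..L} \<subseteq> C \<and> P (\<Sum>m=0..L. f (c m)))
     \<longleftrightarrow> (\<exists>A. A \<subseteq> C \<and> card A = L + 1 \<and> P (\<Sum>x\<in>A. f x))"
proof
  assume "\<exists>c. inj_on c {0..L} \<and> c ` {0..L} \<subseteq> C \<and> P (\<Sum>m=0..L. f (c m))"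
  then obtain c where "inj_on c {0..L}" "c ` {0..L} \<subseteq> C" "P (\<Sum>m=0..L. f (c m))"
    by blast
  then show "\<exists>A. A \<subseteq> C \<and> card A = L + 1 \<and> P (\<Sum>x\<in>A. f x)"
    by (intro exI[of _ "c ` {0..L}"]) (simp add: card_image sum.reindex)
next
  assume "\<exists>A. A \<subseteq> C \<and> card A = L + 1 \<and> P (\<Sum>x\<in>A. f x)"
  then obtain A where A: "A \<subseteq> C" "card A = L + 1" "P (\<Sum>x\<in>A. f x)"
    by blast
  then have "finite A"
    by (simp add: card_ge_0_finite)
  then obtain c where "bij_betw c {0..<card A} A"
    using ex_bij_betw_nat_finite by blast
  then have c: "bij_betw c {0..L} A"
    using A(2) by (simp add: atLeastLessThanSuc_atLeastAtMost)
  then show "\<exists>c. inj_on c {0..L} \<and> c ` {0..L} \<subseteq> C \<and> P (\<Sum>m=0..L. f (c m))"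
    using A sum.reindex_bij_betw[OF c, of f] by (auto simp: bij_betw_def)
qed

lemma strongly_list_decodable_iff_subsets:
  "strongly_list_decodable C \<tau> L \<longleftrightarrow>
     \<not> (\<exists>y A. A \<subseteq> C \<and> card A = L + 1 \<and> (\<Sum>x\<in>A. real (hamming_weight (y - x))) \<le> (real L + 1) * \<tau>)"
proof -
  have "(\<exists>c. inj_on c {0..L} \<and> c ` {0..L} \<subseteq> C \<and>
          (\<Sum>m=0..L. real (hamming_weight (y - c m))) \<le> (real L + 1) * \<tau>)
    \<longleftrightarrow> (\<exists>A. A \<subseteq> C \<and> card A = L + 1 \<and>
          (\<Sum>x\<in>A. real (hamming_weight (y - x))) \<le> (real L + 1) * \<tau>)" for y
    by (rule ex_inj_indexing_iff_ex_subset_card)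
  then show ?thesis
    unfolding strongly_list_decodable_def by simp
qed

lemma L_MDS_iff_subsets:
  fixes C :: "('a::field ^ 'n) set"
  assumes "linear_code C k"
  shows "L_MDS C k L \<longleftrightarrow>
    \<not> (\<exists>y A. A \<subseteq> C \<and> card A = L + 1 \<and> (\<Sum>x\<in>A. hamming_weight (y - x)) \<le> L * (CARD('n) - k))"
proof -
  have radius: "(real L + 1) * (real L * (real CARD('n) - real k) / (real L + 1))
      = real (L * (CARD('n) - k))"
    using linear_code_dim_le[OF assms] by (simp add: of_nat_diff)
  show ?thesis
    unfolding L_MDS_def strongly_list_decodable_iff_subsets radius of_nat_sum[symmetric] of_nat_le_iff
    using assms by simp
qed

lemma MDS_code_close_list_nondegenerate:
  fixes C :: "('a::field ^ 'n) set"
  assumes mds: "MDS_code C k" and A: "A \<subseteq> C" "card A = l + 1" and l: "1 \<le> l"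
    and close: "(\<Sum>x\<in>A. hamming_weight (y - x)) \<le> l * (CARD('n) - k)"
  shows "1 \<le> k" "k < CARD('n)" "y \<notin> C"
proof -
  have fin: "finite A"
    using A(2) by (simp add: card_ge_0_finite)
  obtain a b where ab: "a \<in> A" "b \<in> A" "a \<noteq> b"
    using A(2) l fin card_le_Suc0_iff_eq[of A] by auto
  then show "1 \<le> k"
    using MDS_code_dim_pos[OF mds] A(1) by blast
  show "k < CARD('n)"
  proof (rule ccontr)
    assume "\<not> k < CARD('n)"
    then have "\<forall>x\<in>A. hamming_weight (y - x) = 0"
      using close fin by simp
    then show False
      using ab by (metis hamming_weight_eq_0_iff right_minus_eq)
  qed
  show "y \<notin> C"
  proof
    assume y: "y \<in> C"
    have "l \<le> card (A - {y})"
      using diff_card_le_card_Diff[of "{y}" A] A(2) by simp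
    then have "l * (CARD('n) - k + 1) \<le> card (A - {y}) * (CARD('n) - k + 1)"
      by (rule mult_right_mono) simp
    also have "\<dots> \<le> (\<Sum>x\<in>A - {y}. hamming_weight (y - x))"
      using MDS_code_dist[OF mds y] A(1) by (intro sum_bounded_below[where 'a = nat, simplified]) auto
    also have "\<dots> \<le> (\<Sum>x\<in>A. hamming_weight (y - x))"
      using fin by (intro sum_mono2) auto
    finally show False
      using close l by simp
  qed
qed

lemma close_list_extend:
  fixes C :: "('a::ab_group_add ^ 'n) set"
  assumes "finite C" and A: "A \<subseteq> C" "card A = l + 1" and close: "(\<Sum>x\<in>A. hamming_weight (y - x)) \<le> l * r"
    and "l \<le> L" and ball: "L + 1 \<le> card (C \<inter> hamming_ball y r)"
  shows "\<exists>A'. A' \<subseteq> C \<and> card A' = L + 1 \<and> (\<Sum>x\<in>A'. hamming_weight (y - x)) \<le> L * r"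
proof -
  have finA: "finite A"
    using A(2) by (simp add: card_ge_0_finite)
  have "L - l \<le> card (C \<inter> hamming_ball y r - A)"
    using diff_card_le_card_Diff[OF finA, of "C \<inter> hamming_ball y r"] ball A(2) by linarith
  then obtain D where D: "D \<subseteq> C \<inter> hamming_ball y r - A" "card D = L - l" "finite D"
    by (rule obtain_subset_with_card_n)
  have "card (A \<union> D) = L + 1"
    using D A(2) finA \<open>l \<le> L\<close> by (subst card_Un_disjoint) auto
  moreover have "(\<Sum>x\<in>A \<union> D. hamming_weight (y - x)) \<le> L * r"
  proof -
    have "(\<Sum>x\<in>D. hamming_weight (y - x)) \<le> (L - l) * r"
      using D sum_bounded_above[of D "\<lambda>x. hamming_weight (y - x)" r] by (auto simp: hamming_ball_def)
    then have "(\<Sum>x\<in>A \<union> D. hamming_weight (y - x)) \<le> l * r + (L - l) * r"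
      using close D finA by (subst sum.union_disjoint) auto
    also have "\<dots> = L * r"
      using \<open>l \<le> L\<close> by (simp flip: add_mult_distrib)
    finally show ?thesis .
  qed
  ultimately show ?thesis
    using A(1) D(1) by blast
qed

theorem mainTheorem9:
  fixes C :: "('a::{finite,field} ^ 'n) set" and k L :: nat
  assumes mds: "MDS_code C k"
    and Lpos: "L \<ge> 1"
    and Lbound: "let n = CARD('n);
                     num = (if k = 0 then 0 else (n - 1) choose (k - 1));
                     den = (if k = 0 then 0 else ((n + k + 1) div 2 - 2) choose (k - 1))
                 in den = 0 \<or> real L < max (real num / real den) (real k) + 1"
    and LMDS: "L_MDS C k L"
  shows "\<forall>l\<in>{1..L}. L_MDS C k l"
proof
  fix l assume "l \<in> {1..L}"
  then have l: "1 \<le> l" "l \<le> L"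
    by auto
  have lin: "linear_code C k"
    using mds by (simp add: MDS_code_def)
  show "L_MDS C k l"
  proof (rule ccontr)
    assume "\<not> L_MDS C k l"
    then obtain y A where A: "A \<subseteq> C" "card A = l + 1"
      and close: "(\<Sum>x\<in>A. hamming_weight (y - x)) \<le> l * (CARD('n) - k)"
      using L_MDS_iff_subsets[OF lin] by blast
    have k: "1 \<le> k" "k < CARD('n)" and y: "y \<notin> C"
      using MDS_code_close_list_nondegenerate[OF mds A l(1) close] by auto
    have "k - 1 \<le> (CARD('n) + k + 1) div 2 - 2" \<comment> \<open>so the denominator in \<open>Lbound\<close> is nonzero\<close>
      using k by linarith
    then have "real L < max (real ((CARD('n) - 1) choose (k - 1))
                       / real (((CARD('n) + k + 1) div 2 - 2) choose (k - 1))) (real k) + 1"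
      using Lbound k by (simp add: Let_def)
    also have "\<dots> \<le> real (card (C \<inter> hamming_ball y (CARD('n) - k)))"
      using MDS_code_card_ball_ge[OF mds k y] .
    finally have "L + 1 \<le> card (C \<inter> hamming_ball y (CARD('n) - k))"
      by simp
    then show False
      using close_list_extend[OF _ A close l(2)] LMDS L_MDS_iff_subsets[OF lin] by auto
  qed
qed

end
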